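(* Let $(W,S)$ be a Coxeter system and partition $S=B\sqcup C$. Let $f,f'\in W_B$ and $g,g'\in W_C$. Then $\ell(fg)=\ell(gf)=\ell(f)+\ell(g)$. Let $s\in B$ be a simple reflection commuting with every element of $C$, and $t\in B$ arbitrary. Then: (1) $s\in\mathcal R(f)$ if and only if $s\in\mathcal R(gfg')$; (2) if $t\notin\mathcal R(f)$ then $t\notin\mathcal R(fg)$; (3) $t\in\mathcal R(f)$ if and only if $t\in\mathcal R(gf)$; (4) if $t\notin\mathcal R(f)$ then $t\notin\mathcal R(gfg')$; (5) if $\ell(ff')=\ell(f)+\ell(f')$, then $t\in\mathcal R(f')$ implies $t\in\mathcal R(fgf')$.
   Context: $W_B$, $W_C$ denote the standard parabolic subgroups generated by $B$ and $C$; $\ell$ is the length function and $\mathcal R(w)$ the right descent set $\{u\in S:\ell(wu)<\ell(w)\}$. *)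

theory Defs
  imports "HOL-Algebra.Algebra"
begin

definition word_eval :: "('a, 'b) monoid_scheme \<Rightarrow> 'a list \<Rightarrow> 'a" where
  "word_eval G ws = foldr (\<lambda>x y. x \<otimes>\<^bsub>G\<^esub> y) ws \<one>\<^bsub>G\<^esub>"

definition alt_word :: "'a \<Rightarrow> 'a \<Rightarrow> nat \<Rightarrow> 'a list" where
  "alt_word s t n = map (\<lambda>i. if even i then s else t) [0..<n]"

inductive cox_equiv :: "('a, 'b) monoid_scheme \<Rightarrow> 'a set \<Rightarrow> 'a list \<Rightarrow> 'a list \<Rightarrow> bool"
  for G S where
  refl: "cox_equiv G S w w"
| sym: "cox_equiv G S w v \<Longrightarrow> cox_equiv G S v w"
| trans: "cox_equiv G S u v \<Longrightarrow> cox_equiv G S v w \<Longrightarrow> cox_equiv G S u w"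
| cancel: "s \<in> S \<Longrightarrow> cox_equiv G S (u @ [s, s] @ v) (u @ v)"
| braid: "s \<in> S \<Longrightarrow> t \<in> S \<Longrightarrow> m = group.ord G (s \<otimes>\<^bsub>G\<^esub> t) \<Longrightarrow> 0 < m \<Longrightarrow>
          cox_equiv G S (u @ alt_word s t (2 * m) @ v) (u @ v)"

text \<open>(G,S) is a Coxeter system: S is a generating set of involutions of G and
  G is presented by the generators S and the relations s^2 = 1, (st)^(m(s,t)) = 1
  (i.e. every word over S representing 1 is reducible to the empty word by the relations).\<close>
definition coxeter_system :: "('a, 'b) monoid_scheme \<Rightarrow> 'a set \<Rightarrow> bool" where
  "coxeter_system G S \<longleftrightarrow>
     group G \<and> S \<subseteq> carrier G \<and> \<one>\<^bsub>G\<^esub> \<notin> S \<and>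
     (\<forall>s\<in>S. s \<otimes>\<^bsub>G\<^esub> s = \<one>\<^bsub>G\<^esub>) \<and>
     generate G S = carrier G \<and>
     (\<forall>ws. set ws \<subseteq> S \<longrightarrow> word_eval G ws = \<one>\<^bsub>G\<^esub> \<longrightarrow> cox_equiv G S ws [])"

definition cox_length :: "('a, 'b) monoid_scheme \<Rightarrow> 'a set \<Rightarrow> 'a \<Rightarrow> nat" where
  "cox_length G S w = (LEAST n. \<exists>ws. set ws \<subseteq> S \<and> length ws = n \<and> word_eval G ws = w)"

definition right_descents :: "('a, 'b) monoid_scheme \<Rightarrow> 'a set \<Rightarrow> 'a \<Rightarrow> 'a set" where
  "right_descents G S w = {u \<in> S. cox_length G S (w \<otimes>\<^bsub>G\<^esub> u) < cox_length G S w}"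

end

theory Submission
  imports Defs
begin

text \<open>
  The argument rests on the reflection cocycle \<open>N w\<close> (\<open>inversions w\<close> below): the set of
  reflections \<open>r\<close> with \<open>len (r w) < len w\<close>. Following Bourbaki, it is the set of reflections
  that occur an odd number of times in the sequence (\<open>refl_seq\<close>)
  \<open>s\<^sub>1, s\<^sub>1 s\<^sub>2 s\<^sub>1, s\<^sub>1 s\<^sub>2 s\<^sub>3 s\<^sub>2 s\<^sub>1, \<dots>\<close> of any word for \<open>w\<close>; this does not depend on the
  word, because in the sequence of each defining relation every reflection occurs an even number
  of times. Then \<open>N (x y)\<close> is the symmetric difference of \<open>N x\<close> and \<open>x (N y) x\<^sup>-\<^sup>1\<close>, its
  cardinality is the length, and \<open>s\<close> is a right descent of \<open>w\<close> iff \<open>w s w\<^sup>-\<^sup>1 \<in> N w\<close>.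

  For \<open>w\<close> in a standard parabolic subgroup \<open>W\<^sub>P\<close> all of \<open>N w\<close> lies in \<open>W\<^sub>P\<close>, and
  \<open>W\<^sub>P \<inter> W\<^sub>Q = W\<^bsub>P \<inter> Q\<^esub>\<close>. Since \<open>W\<^sub>B \<inter> W\<^sub>C = 1\<close>, the two halves of \<open>N (f g)\<close> are
  disjoint, which gives the length formula. Each descent statement is decided by locating the
  reflection \<open>(f g) t (f g)\<^sup>-\<^sup>1\<close> in \<open>N (f g) = N f \<union> f (N g) f\<^sup>-\<^sup>1\<close>; the rigidity fact
  behind all of them is that \<open>x g = g p\<close> with \<open>x, p \<in> W\<^sub>B\<close> and \<open>g \<in> W\<^sub>C\<close> forces \<open>x = p\<close>,
  proved by peeling off left descents of \<open>g\<close>, each of which turns out to commute with \<open>x\<close>.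
\<close>

section \<open>Words, conjugation and reflection sequences\<close>

definition odd_occurrences :: "'x list \<Rightarrow> 'x set" where
  "odd_occurrences xs = {x. odd (count_list xs x)}"

lemma odd_occurrences_Nil [simp]: "odd_occurrences [] = {}"
  by (simp add: odd_occurrences_def)

lemma odd_occurrences_append:
  "odd_occurrences (xs @ ys) = sym_diff (odd_occurrences xs) (odd_occurrences ys)"
  by (auto simp: odd_occurrences_def)

lemma odd_occurrences_Cons: "odd_occurrences (x # xs) = sym_diff {x} (odd_occurrences xs)"
  using odd_occurrences_append[of "[x]" xs] by (simp add: odd_occurrences_def)

lemma odd_occurrences_double: "odd_occurrences (xs @ xs) = {}"
  by (simp add: odd_occurrences_append)

lemma odd_occurrences_subset: "odd_occurrences xs \<subseteq> set xs"
  unfolding odd_occurrences_def using count_notin by fastforce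

lemma finite_odd_occurrences [simp]: "finite (odd_occurrences xs)"
  by (rule finite_subset[OF odd_occurrences_subset]) simp

lemma odd_occurrences_distinct: "distinct xs \<Longrightarrow> odd_occurrences xs = set xs"
  by (induction xs) (auto simp: odd_occurrences_Cons dest: set_mp[OF odd_occurrences_subset])

lemma odd_occurrences_map:
  assumes "inj_on f A" and "set xs \<subseteq> A"
  shows "odd_occurrences (map f xs) = f ` odd_occurrences xs"
  using assms(2)
proof (induction xs)
  case (Cons x xs)
  have "odd_occurrences xs \<subseteq> A"
    using Cons.prems odd_occurrences_subset by force
  then show ?case
    using Cons assms(1) by (auto simp: odd_occurrences_Cons inj_on_def)
qed simp

lemma card_sym_diff:
  assumes "finite A" and "finite B"
  shows "card (sym_diff A B) + 2 * card (A \<inter> B) = card A + card B"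
proof -
  have sub: "A \<inter> B \<subseteq> A \<union> B" and fin: "finite (A \<union> B)"
    using assms by auto
  have "sym_diff A B = (A \<union> B) - (A \<inter> B)"
    by blast
  then have "card (sym_diff A B) + card (A \<inter> B) = card (A \<union> B)"
    using card_Diff_subset[OF finite_subset[OF sub fin] sub] card_mono[OF fin sub] by simp
  then show ?thesis
    using card_Un_Int[OF assms] by linarith
qed

lemma image_eq_if_subset_image:
  assumes "finite A" and "A \<subseteq> h ` A" and "inj_on h A"
  shows "h ` A = A"
  using assms card_image card_subset_eq finite_imageI by metis

definition remove_nth :: "nat \<Rightarrow> 'x list \<Rightarrow> 'x list" where
  "remove_nth i xs = take i xs @ drop (Suc i) xs"

lemma set_remove_nth_subset: "set (remove_nth i xs) \<subseteq> set xs"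
  unfolding remove_nth_def using set_take_subset set_drop_subset by fastforce

lemma length_remove_nth: "i < length xs \<Longrightarrow> length (remove_nth i xs) = length xs - 1"
  by (simp add: remove_nth_def)

lemma alt_word_Suc: "alt_word s t (Suc n) = s # alt_word t s n"
  by (simp add: alt_word_def upt_conv_Cons map_Suc_upt[symmetric] comp_def del: upt_Suc)

lemma set_alt_word: "set (alt_word s t n) \<subseteq> {s, t}"
  by (auto simp: alt_word_def)

lemma length_alt_word [simp]: "length (alt_word s t n) = n"
  by (simp add: alt_word_def)

context monoid
begin

lemma word_eval_Nil [simp]: "word_eval G [] = \<one>"
  by (simp add: word_eval_def)

lemma word_eval_Cons [simp]: "word_eval G (x # ws) = x \<otimes> word_eval G ws"
  by (simp add: word_eval_def)

lemma word_eval_closed [simp]: "set ws \<subseteq> carrier G \<Longrightarrow> word_eval G ws \<in> carrier G"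
  by (induction ws) auto

lemma word_eval_append:
  "set ws \<subseteq> carrier G \<Longrightarrow> set vs \<subseteq> carrier G \<Longrightarrow>
   word_eval G (ws @ vs) = word_eval G ws \<otimes> word_eval G vs"
  by (induction ws) (auto simp: m_assoc)

lemma word_eval_in_generate: "set ws \<subseteq> P \<Longrightarrow> word_eval G ws \<in> generate G P"
  by (induction ws) (auto intro: generate.intros)

lemma pow_mult_swap:
  assumes "a \<in> carrier G" and "b \<in> carrier G"
  shows "(a \<otimes> b) [^] (j::nat) \<otimes> a = a \<otimes> (b \<otimes> a) [^] j"
proof (induction j)
  case (Suc j)
  have "(a \<otimes> b) [^] Suc j \<otimes> a = ((a \<otimes> b) [^] j \<otimes> a) \<otimes> (b \<otimes> a)"
    using assms by (simp add: m_assoc)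
  also have "\<dots> = a \<otimes> (b \<otimes> a) [^] Suc j"
    using assms by (simp add: Suc.IH m_assoc)
  finally show ?case .
qed (use assms in simp)

end

context group
begin

lemma inv_mult_cancel_left [simp]: "a \<in> carrier G \<Longrightarrow> x \<in> carrier G \<Longrightarrow> inv a \<otimes> (a \<otimes> x) = x"
  using m_assoc[of "inv a" a x] by simp

definition conjugate :: "'a \<Rightarrow> 'a \<Rightarrow> 'a" where
  "conjugate a x = a \<otimes> x \<otimes> inv a"

lemma conjugate_closed [simp]:
  "a \<in> carrier G \<Longrightarrow> x \<in> carrier G \<Longrightarrow> conjugate a x \<in> carrier G"
  by (simp add: conjugate_def)

lemma conjugate_by_one [simp]: "x \<in> carrier G \<Longrightarrow> conjugate \<one> x = x"
  by (simp add: conjugate_def)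

lemma conjugate_one [simp]: "a \<in> carrier G \<Longrightarrow> conjugate a \<one> = \<one>"
  by (simp add: conjugate_def)

lemma conjugate_mult:
  "a \<in> carrier G \<Longrightarrow> b \<in> carrier G \<Longrightarrow> x \<in> carrier G \<Longrightarrow>
   conjugate (a \<otimes> b) x = conjugate a (conjugate b x)"
  by (simp add: conjugate_def m_assoc inv_mult_group)

lemma conjugate_inv_conjugate [simp]:
  "a \<in> carrier G \<Longrightarrow> x \<in> carrier G \<Longrightarrow> conjugate (inv a) (conjugate a x) = x"
  by (simp add: conjugate_def m_assoc)

lemma inj_on_conjugate: "a \<in> carrier G \<Longrightarrow> inj_on (conjugate a) (carrier G)"
  by (metis conjugate_inv_conjugate inj_onI)

lemma conjugate_eq_one_iff:
  "a \<in> carrier G \<Longrightarrow> x \<in> carrier G \<Longrightarrow> conjugate a x = \<one> \<longleftrightarrow> x = \<one>"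
  by (metis conjugate_inv_conjugate conjugate_one inv_closed)

lemma conjugate_distrib:
  "a \<in> carrier G \<Longrightarrow> x \<in> carrier G \<Longrightarrow> y \<in> carrier G \<Longrightarrow>
   conjugate a (x \<otimes> y) = conjugate a x \<otimes> conjugate a y"
  by (simp add: conjugate_def m_assoc)

lemma conjugate_self: "a \<in> carrier G \<Longrightarrow> conjugate a a = a"
  by (simp add: conjugate_def m_assoc)

lemma conjugate_mult_eq: "a \<in> carrier G \<Longrightarrow> x \<in> carrier G \<Longrightarrow> conjugate a x \<otimes> a = a \<otimes> x"
  by (simp add: conjugate_def m_assoc)

lemma conjugate_in_subgroup_iff:
  assumes H: "subgroup H G" and a: "a \<in> H" and x: "x \<in> carrier G"
  shows "conjugate a x \<in> H \<longleftrightarrow> x \<in> H"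
proof
  have closed: "conjugate b y \<in> H" if "b \<in> H" and "y \<in> H" for b y
    unfolding conjugate_def
    using that subgroup.m_closed[OF H] subgroup.m_inv_closed[OF H] by blast
  show "x \<in> H" if "conjugate a x \<in> H"
  proof -
    have "conjugate (inv a) (conjugate a x) \<in> H"
      using closed[OF subgroup.m_inv_closed[OF H a] that] .
    moreover have "a \<in> carrier G"
      using subgroup.mem_carrier[OF H a] .
    ultimately show ?thesis
      using x by simp
  qed
  show "conjugate a x \<in> H" if "x \<in> H"
    using closed[OF a that] .
qed

lemma commute_generate:
  assumes s: "s \<in> carrier G" and H: "H \<subseteq> carrier G" and comm: "\<forall>h\<in>H. s \<otimes> h = h \<otimes> s"
    and w: "w \<in> generate G H"
  shows "s \<otimes> w = w \<otimes> s"
  using w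
proof (induction rule: generate.induct)
  case one
  then show ?case
    using s by simp
next
  case (incl h)
  then show ?case
    using comm by blast
next
  case (inv h)
  then have h: "h \<in> carrier G" and "s \<otimes> h = h \<otimes> s"
    using H comm by auto
  then have "inv h \<otimes> (s \<otimes> h) \<otimes> inv h = inv h \<otimes> (h \<otimes> s) \<otimes> inv h"
    by simp
  then show ?case
    using s h by (simp add: m_assoc)
next
  case (eng a b)
  have "a \<in> carrier G" and "b \<in> carrier G"
    using eng.hyps generate_incl[OF H] by blast+
  then show ?case
    using s eng.IH by (metis m_assoc)
qed

fun refl_seq :: "'a list \<Rightarrow> 'a list" where
  "refl_seq [] = []"
| "refl_seq (s # ws) = s # map (conjugate s) (refl_seq ws)"

lemma length_refl_seq [simp]: "length (refl_seq ws) = length ws"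
  by (induction ws) auto

lemma refl_seq_closed: "set ws \<subseteq> carrier G \<Longrightarrow> set (refl_seq ws) \<subseteq> carrier G"
  by (induction ws) auto

lemma refl_seq_append:
  assumes "set ws \<subseteq> carrier G" and "set vs \<subseteq> carrier G"
  shows "refl_seq (ws @ vs) = refl_seq ws @ map (conjugate (word_eval G ws)) (refl_seq vs)"
  using assms(1)
proof (induction ws)
  case Nil
  have "map (conjugate \<one>) (refl_seq vs) = refl_seq vs"
    using refl_seq_closed[OF assms(2)] by (auto intro!: map_idI)
  then show ?case
    by simp
next
  case (Cons x ws)
  then have x: "x \<in> carrier G" and ws: "set ws \<subseteq> carrier G"
    by auto
  have "map (conjugate x) (map (conjugate (word_eval G ws)) (refl_seq vs))
      = map (conjugate (x \<otimes> word_eval G ws)) (refl_seq vs)"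
    using refl_seq_closed[OF assms(2)] x ws by (auto simp: conjugate_mult)
  then show ?case
    using Cons.IH[OF ws] by simp
qed

lemma refl_seq_nth:
  "set ws \<subseteq> carrier G \<Longrightarrow> i < length ws \<Longrightarrow>
   refl_seq ws ! i = conjugate (word_eval G (take i ws)) (ws ! i)"
proof (induction ws arbitrary: i)
  case (Cons x ws)
  then have x: "x \<in> carrier G" and ws: "set ws \<subseteq> carrier G"
    by auto
  show ?case
  proof (cases i)
    case (Suc j)
    then have j: "j < length ws"
      using Cons.prems by simp
    have "set (take j ws) \<subseteq> carrier G"
      using ws set_take_subset by (metis subset_trans)
    moreover have "ws ! j \<in> carrier G"
      using ws j nth_mem by blast
    ultimately show ?thesis
      using Cons.IH[OF ws j] x j Suc by (simp add: conjugate_mult)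
  qed (simp add: x)
qed simp

end

section \<open>The reflection cocycle\<close>

locale coxeter = group G for G :: "('a, 'b) monoid_scheme" (structure) +
  fixes S :: "'a set"
  assumes coxeter_system: "coxeter_system G S"
begin

abbreviation len :: "'a \<Rightarrow> nat" where
  "len \<equiv> cox_length G S"

lemma gens_carrier: "S \<subseteq> carrier G"
  using coxeter_system by (simp add: coxeter_system_def)

lemma gen_closed [simp]: "s \<in> S \<Longrightarrow> s \<in> carrier G"
  using gens_carrier by blast

lemma one_not_gen: "\<one> \<notin> S"
  using coxeter_system by (simp add: coxeter_system_def)

lemma gen_square [simp]: "s \<in> S \<Longrightarrow> s \<otimes> s = \<one>"
  using coxeter_system by (simp add: coxeter_system_def)

lemma gen_inv [simp]: "s \<in> S \<Longrightarrow> inv s = s"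
  by (rule inv_equality) simp_all

lemma gen_cancel_left: "s \<in> S \<Longrightarrow> x \<in> carrier G \<Longrightarrow> s \<otimes> (s \<otimes> x) = x"
  by (simp flip: m_assoc)

lemma generate_gens: "generate G S = carrier G"
  using coxeter_system by (simp add: coxeter_system_def)

lemma cox_equiv_Nil_if_eval_one:
  "set ws \<subseteq> S \<Longrightarrow> word_eval G ws = \<one> \<Longrightarrow> cox_equiv G S ws []"
  using coxeter_system by (simp add: coxeter_system_def)

lemma word_eval_gens_closed [simp]: "set ws \<subseteq> S \<Longrightarrow> word_eval G ws \<in> carrier G"
  using gens_carrier by (intro word_eval_closed) auto

lemma word_eval_gens_append:
  "set ws \<subseteq> S \<Longrightarrow> set vs \<subseteq> S \<Longrightarrow> word_eval G (ws @ vs) = word_eval G ws \<otimes> word_eval G vs"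
  using gens_carrier by (intro word_eval_append) auto

lemma word_eval_rev: "set ws \<subseteq> S \<Longrightarrow> word_eval G (rev ws) = inv (word_eval G ws)"
  by (induction ws) (auto simp: word_eval_gens_append inv_mult_group)

lemma refl_seq_gens_closed: "set ws \<subseteq> S \<Longrightarrow> set (refl_seq ws) \<subseteq> carrier G"
  using refl_seq_closed gens_carrier by blast

lemma conjugate_gen_gen [simp]: "s \<in> S \<Longrightarrow> x \<in> carrier G \<Longrightarrow> conjugate s (conjugate s x) = x"
  by (metis gen_closed gen_inv conjugate_inv_conjugate)

lemma word_of_generate:
  assumes "w \<in> generate G P" and "P \<subseteq> S"
  shows "\<exists>ws. set ws \<subseteq> P \<and> word_eval G ws = w"
  using assms
proof (induction rule: generate.induct)
  case one
  show ?case
    by (intro exI[of _ "[]"]) simp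
next
  case (incl h)
  then show ?case
    by (intro exI[of _ "[h]"]) auto
next
  case (inv h)
  then show ?case
    by (intro exI[of _ "[h]"]) auto
next
  case (eng h1 h2)
  then obtain ws vs where "set ws \<subseteq> P" "word_eval G ws = h1" "set vs \<subseteq> P" "word_eval G vs = h2"
    by blast
  with eng.prems show ?case
    by (intro exI[of _ "ws @ vs"]) (auto simp: word_eval_gens_append)
qed

lemma word_of_carrier: "w \<in> carrier G \<Longrightarrow> \<exists>ws. set ws \<subseteq> S \<and> word_eval G ws = w"
  using word_of_generate[of w S] generate_gens by auto

lemma word_eval_alt_word:
  "s \<in> S \<Longrightarrow> t \<in> S \<Longrightarrow> word_eval G (alt_word s t (2 * k)) = (s \<otimes> t) [^] k"
proof (induction k)
  case (Suc k)
  have "alt_word s t (2 * Suc k) = s # t # alt_word s t (2 * k)"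
    by (simp add: alt_word_Suc)
  with Suc show ?case
    using nat_pow_Suc2[of "s \<otimes> t" k] by (simp add: m_assoc)
qed (simp add: alt_word_def)

lemma refl_seq_alt_word_nth:
  "s \<in> S \<Longrightarrow> t \<in> S \<Longrightarrow> i < n \<Longrightarrow> refl_seq (alt_word s t n) ! i = (s \<otimes> t) [^] i \<otimes> s"
proof (induction n arbitrary: s t i)
  case (Suc n)
  show ?case
  proof (cases i)
    case (Suc j)
    have "refl_seq (alt_word s t (Suc n)) ! i = conjugate s ((t \<otimes> s) [^] j \<otimes> t)"
      using Suc.prems Suc.IH[of t s j] \<open>i = Suc j\<close> by (simp add: alt_word_Suc)
    also have "\<dots> = ((s \<otimes> (t \<otimes> s) [^] j) \<otimes> t) \<otimes> s"
      using Suc.prems by (simp add: conjugate_def m_assoc)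
    also have "\<dots> = (((s \<otimes> t) [^] j \<otimes> s) \<otimes> t) \<otimes> s"
      using Suc.prems by (simp only: pow_mult_swap gen_closed)
    also have "\<dots> = (s \<otimes> t) [^] i \<otimes> s"
      using Suc.prems \<open>i = Suc j\<close> by (simp add: m_assoc)
    finally show ?thesis .
  qed (use Suc.prems in \<open>simp add: alt_word_Suc\<close>)
qed simp

lemma odd_occurrences_refl_seq_braid:
  assumes "s \<in> S" and "t \<in> S" and "(s \<otimes> t) [^] m = \<one>"
  shows "odd_occurrences (refl_seq (alt_word s t (2 * m))) = {}"
proof -
  define rs where "rs = refl_seq (alt_word s t (2 * m))"
  have "rs = take m rs @ take m rs"
  proof (rule nth_equalityI)
    fix i assume "i < length rs"
    then have "i < 2 * m"
      by (simp add: rs_def)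
    moreover have "(s \<otimes> t) [^] (i - m) \<otimes> s = (s \<otimes> t) [^] i \<otimes> s" if "m \<le> i"
      using assms that nat_pow_mult[of "s \<otimes> t" "i - m" m] by simp
    ultimately show "rs ! i = (take m rs @ take m rs) ! i"
      using assms by (simp add: rs_def nth_append refl_seq_alt_word_nth)
  qed (simp add: rs_def)
  then show ?thesis
    by (metis odd_occurrences_double rs_def)
qed

lemma invariants_insert_relator:
  assumes r: "set r \<subseteq> S" and r_eval: "word_eval G r = \<one>"
    and r_odd: "odd_occurrences (refl_seq r) = {}"
  shows "(set (u @ r @ v) \<subseteq> S \<longleftrightarrow> set (u @ v) \<subseteq> S) \<and>
    (set (u @ r @ v) \<subseteq> S \<longrightarrow> word_eval G (u @ r @ v) = word_eval G (u @ v) \<and>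
      odd_occurrences (refl_seq (u @ r @ v)) = odd_occurrences (refl_seq (u @ v)))"
proof (intro conjI impI)
  show "set (u @ r @ v) \<subseteq> S \<longleftrightarrow> set (u @ v) \<subseteq> S"
    using r by auto
  assume "set (u @ r @ v) \<subseteq> S"
  then have u: "set u \<subseteq> S" and v: "set v \<subseteq> S"
    by auto
  show "word_eval G (u @ r @ v) = word_eval G (u @ v)"
    using u r v r_eval by (simp add: word_eval_gens_append)
  have carrier: "set u \<subseteq> carrier G" "set r \<subseteq> carrier G" "set v \<subseteq> carrier G"
    using u r v gens_carrier by auto
  have "map (conjugate \<one>) (refl_seq v) = refl_seq v"
    using refl_seq_closed[OF carrier(3)] by (simp add: map_idI subset_iff)
  then have "refl_seq (r @ v) = refl_seq r @ refl_seq v"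
    using refl_seq_append[OF carrier(2,3)] r_eval by simp
  then have "refl_seq (u @ r @ v)
      = refl_seq u @ map (conjugate (word_eval G u)) (refl_seq r)
          @ map (conjugate (word_eval G u)) (refl_seq v)"
    using refl_seq_append[of u "r @ v"] carrier by simp
  moreover have "odd_occurrences (map (conjugate (word_eval G u)) (refl_seq r)) = {}"
    using odd_occurrences_map[OF inj_on_conjugate refl_seq_closed[OF carrier(2)]] u r_odd by simp
  ultimately show "odd_occurrences (refl_seq (u @ r @ v)) = odd_occurrences (refl_seq (u @ v))"
    using refl_seq_append[OF carrier(1,3)] by (simp add: odd_occurrences_append)
qed

lemma cox_equiv_invariants:
  assumes "cox_equiv G S u v"
  shows "(set u \<subseteq> S \<longleftrightarrow> set v \<subseteq> S) \<and>
    (set u \<subseteq> S \<longrightarrow> word_eval G u = word_eval G v \<and>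
      odd_occurrences (refl_seq u) = odd_occurrences (refl_seq v))"
  using assms
proof (induction rule: cox_equiv.induct)
  case (cancel s u v)
  have "set [s, s] \<subseteq> S" and "word_eval G [s, s] = \<one>"
    using cancel by simp_all
  moreover have "odd_occurrences (refl_seq [s, s]) = {}"
    using odd_occurrences_double[of "[s]"] cancel by (simp add: conjugate_self)
  ultimately show ?case
    by (rule invariants_insert_relator)
next
  case (braid s t m u v)
  have "set (alt_word s t (2 * m)) \<subseteq> S"
    using braid(1,2) set_alt_word[of s t "2 * m"] by blast
  moreover have "(s \<otimes> t) [^] m = \<one>"
    using braid(1-3) pow_ord_eq_1[of "s \<otimes> t"] by simp
  then have "word_eval G (alt_word s t (2 * m)) = \<one>"
    and "odd_occurrences (refl_seq (alt_word s t (2 * m))) = {}"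
    using braid(1,2) by (simp_all add: word_eval_alt_word odd_occurrences_refl_seq_braid)
  ultimately show ?case
    by (rule invariants_insert_relator)
qed auto

lemma odd_occurrences_refl_seq_eq:
  assumes ws: "set ws \<subseteq> S" and vs: "set vs \<subseteq> S"
    and eq: "word_eval G ws = word_eval G vs"
  shows "odd_occurrences (refl_seq ws) = odd_occurrences (refl_seq vs)"
proof -
  \<comment> \<open>\<open>us @ rev vs\<close> spells a relation, so its parity set is empty\<close>
  define T where "T = odd_occurrences (map (conjugate (word_eval G vs)) (refl_seq (rev vs)))"
  have "odd_occurrences (refl_seq us) = T" if us: "set us \<subseteq> S" and "word_eval G us = word_eval G vs" for us
  proof -
    have "word_eval G (us @ rev vs) = \<one>"
      using that vs by (simp add: word_eval_gens_append word_eval_rev)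
    then have "odd_occurrences (refl_seq (us @ rev vs)) = {}"
      using cox_equiv_invariants[OF cox_equiv_Nil_if_eval_one] us vs by simp
    moreover have "refl_seq (us @ rev vs) = refl_seq us @ map (conjugate (word_eval G us)) (refl_seq (rev vs))"
      using us vs gens_carrier by (intro refl_seq_append) auto
    ultimately show ?thesis
      using that by (simp add: T_def odd_occurrences_append) blast
  qed
  then show ?thesis
    using ws vs eq by metis
qed

definition reflections :: "'a set" where
  "reflections = {conjugate a s | a s. a \<in> carrier G \<and> s \<in> S}"

lemma reflection_closed: "r \<in> reflections \<Longrightarrow> r \<in> carrier G"
  by (auto simp: reflections_def)

lemma reflection_square: "r \<in> reflections \<Longrightarrow> r \<otimes> r = \<one>"
  by (auto simp: reflections_def simp flip: conjugate_distrib)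

lemma reflection_not_one: "r \<in> reflections \<Longrightarrow> r \<noteq> \<one>"
  using one_not_gen by (auto simp: reflections_def conjugate_eq_one_iff)

lemma set_refl_seq_subset_reflections: "set ws \<subseteq> S \<Longrightarrow> set (refl_seq ws) \<subseteq> reflections"
proof
  fix r assume ws: "set ws \<subseteq> S" and "r \<in> set (refl_seq ws)"
  then obtain i where i: "i < length ws" and r: "r = refl_seq ws ! i"
    by (auto simp: in_set_conv_nth)
  have "set (take i ws) \<subseteq> S"
    using ws set_take_subset by (metis subset_trans)
  then have "word_eval G (take i ws) \<in> carrier G"
    by simp
  moreover have "r = conjugate (word_eval G (take i ws)) (ws ! i)"
    using refl_seq_nth[of ws i] r i ws gens_carrier by simp
  moreover have "ws ! i \<in> S"
    using ws i by auto
  ultimately show "r \<in> reflections"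
    unfolding reflections_def by blast
qed

definition inversions :: "'a \<Rightarrow> 'a set" where
  "inversions w = odd_occurrences (refl_seq (SOME ws. set ws \<subseteq> S \<and> word_eval G ws = w))"

lemma inversions_word_eval:
  assumes "set ws \<subseteq> S"
  shows "inversions (word_eval G ws) = odd_occurrences (refl_seq ws)"
proof -
  let ?vs = "SOME vs. set vs \<subseteq> S \<and> word_eval G vs = word_eval G ws"
  have "set ?vs \<subseteq> S \<and> word_eval G ?vs = word_eval G ws"
    using someI[of "\<lambda>vs. set vs \<subseteq> S \<and> word_eval G vs = word_eval G ws" ws] assms by simp
  then show ?thesis
    unfolding inversions_def using odd_occurrences_refl_seq_eq assms by blast
qed

lemma inversions_subset_refl_seq: "set ws \<subseteq> S \<Longrightarrow> inversions (word_eval G ws) \<subseteq> set (refl_seq ws)"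
  by (simp add: inversions_word_eval odd_occurrences_subset)

lemma inversions_closed: "w \<in> carrier G \<Longrightarrow> inversions w \<subseteq> carrier G"
  using word_of_carrier inversions_subset_refl_seq refl_seq_gens_closed by blast

lemma finite_inversions: "w \<in> carrier G \<Longrightarrow> finite (inversions w)"
  using word_of_carrier inversions_word_eval by force

lemma inversions_subset_reflections: "w \<in> carrier G \<Longrightarrow> inversions w \<subseteq> reflections"
  using word_of_carrier inversions_subset_refl_seq set_refl_seq_subset_reflections by blast

lemma inversions_gen [simp]: "s \<in> S \<Longrightarrow> inversions s = {s}"
  using inversions_word_eval[of "[s]"] by (simp add: odd_occurrences_Cons)

lemma inversions_mult:
  assumes x: "x \<in> carrier G" and y: "y \<in> carrier G"
  shows "inversions (x \<otimes> y) = sym_diff (inversions x) (conjugate x ` inversions y)"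
proof -
  obtain ws vs where ws: "set ws \<subseteq> S" "x = word_eval G ws" and vs: "set vs \<subseteq> S" "y = word_eval G vs"
    using word_of_carrier x y by metis
  have "inversions (x \<otimes> y) = odd_occurrences (refl_seq (ws @ vs))"
    using inversions_word_eval[of "ws @ vs"] ws vs by (simp add: word_eval_gens_append)
  also have "\<dots> = odd_occurrences (refl_seq ws @ map (conjugate x) (refl_seq vs))"
    using refl_seq_append[of ws vs] ws vs gens_carrier by auto
  also have "\<dots> = sym_diff (inversions x) (conjugate x ` inversions y)"
    using odd_occurrences_map[OF inj_on_conjugate[OF x] refl_seq_gens_closed[OF vs(1)]] ws vs
    by (simp add: odd_occurrences_append inversions_word_eval)
  finally show ?thesis .
qed

lemma refl_seq_nth_mult_word_eval:
  assumes ws: "set ws \<subseteq> S" and i: "i < length ws"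
  shows "refl_seq ws ! i \<otimes> word_eval G ws = word_eval G (remove_nth i ws)"
proof -
  define a where "a = word_eval G (take i ws)"
  define d where "d = word_eval G (drop (Suc i) ws)"
  have take: "set (take i ws) \<subseteq> S" and drop: "set (drop (Suc i) ws) \<subseteq> S"
    using ws set_take_subset set_drop_subset by fastforce+
  have s: "ws ! i \<in> S"
    using ws i by auto
  have "ws = take i ws @ ws ! i # drop (Suc i) ws"
    using i by (simp add: id_take_nth_drop)
  then have "word_eval G ws = a \<otimes> (ws ! i \<otimes> d)"
    using take drop s unfolding a_def d_def by (metis word_eval_gens_append word_eval_Cons set_ConsD subsetI subsetD)
  moreover have "refl_seq ws ! i = a \<otimes> ws ! i \<otimes> inv a"
    using refl_seq_nth[of ws i] ws i gens_carrier by (auto simp: conjugate_def a_def)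
  ultimately have "refl_seq ws ! i \<otimes> word_eval G ws = a \<otimes> d"
    using take drop s by (simp add: a_def d_def m_assoc gen_cancel_left)
  then show ?thesis
    using take drop by (simp add: word_eval_gens_append a_def d_def remove_nth_def)
qed

lemma length_word_eval_le: "set ws \<subseteq> S \<Longrightarrow> len (word_eval G ws) \<le> length ws"
  unfolding cox_length_def by (rule Least_le) blast

lemma reduced_word_exists:
  assumes "w \<in> carrier G"
  shows "\<exists>ws. set ws \<subseteq> S \<and> word_eval G ws = w \<and> length ws = len w"
proof -
  have "\<exists>n ws. set ws \<subseteq> S \<and> length ws = n \<and> word_eval G ws = w"
    using word_of_carrier[OF assms] by blast
  from LeastI_ex[OF this] show ?thesis
    unfolding cox_length_def by blast
qed

lemma card_inversions:
  assumes w: "w \<in> carrier G"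
  shows "card (inversions w) = len w"
proof -
  obtain ws where ws: "set ws \<subseteq> S" "word_eval G ws = w" "length ws = len w"
    using reduced_word_exists[OF w] by blast
  \<comment> \<open>a reflection repeated in the sequence of a reduced word would let us delete two letters\<close>
  have "distinct (refl_seq ws)"
  proof (rule ccontr)
    assume "\<not> distinct (refl_seq ws)"
    then obtain i j where ij: "i < j" "j < length ws" and eq: "refl_seq ws ! i = refl_seq ws ! j"
      by (auto simp: distinct_conv_nth) (metis length_refl_seq linorder_neqE_nat)
    define r where "r = refl_seq ws ! j"
    define vs where "vs = remove_nth j ws"
    have vs: "set vs \<subseteq> S" "i < length vs"
      using ws ij set_remove_nth_subset[of j ws] by (auto simp: vs_def length_remove_nth)
    have r: "r \<in> reflections"
      using set_refl_seq_subset_reflections[OF ws(1)] ij by (simp add: r_def subset_iff)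
    have "refl_seq vs ! i = refl_seq ws ! i"
      using refl_seq_nth vs ij ws gens_carrier by (simp add: vs_def remove_nth_def nth_append min_def subset_iff)
    then have "word_eval G (remove_nth i vs) = r \<otimes> word_eval G vs"
      using refl_seq_nth_mult_word_eval[OF vs] eq by (simp add: r_def)
    also have "\<dots> = r \<otimes> (r \<otimes> w)"
      using refl_seq_nth_mult_word_eval[OF ws(1) ij(2)] ws(2) by (simp add: r_def vs_def)
    also have "\<dots> = w"
      using r w reflection_square reflection_closed by (simp flip: m_assoc)
    finally have "len w \<le> length (remove_nth i vs)"
      using length_word_eval_le set_remove_nth_subset vs(1) by (metis subset_trans)
    then show False
      using ij vs ws(3) by (simp add: length_remove_nth vs_def)
  qed
  then show ?thesis
    using ws inversions_word_eval odd_occurrences_distinct distinct_card by fastforce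
qed

lemma length_mult:
  assumes x: "x \<in> carrier G" and y: "y \<in> carrier G"
  shows "len (x \<otimes> y) + 2 * card (inversions x \<inter> conjugate x ` inversions y) = len x + len y"
proof -
  have "card (conjugate x ` inversions y) = card (inversions y)"
    using card_image inj_on_subset[OF inj_on_conjugate[OF x] inversions_closed[OF y]] by blast
  moreover have "card (inversions (x \<otimes> y)) + 2 * card (inversions x \<inter> conjugate x ` inversions y)
      = card (inversions x) + card (conjugate x ` inversions y)"
    using card_sym_diff[OF finite_inversions[OF x] finite_imageI[OF finite_inversions[OF y]]]
    by (simp add: inversions_mult[OF x y])
  ultimately show ?thesis
    by (simp add: x y card_inversions)
qed

lemma length_mult_eq_add_iff:
  assumes "x \<in> carrier G" and "y \<in> carrier G"
  shows "len (x \<otimes> y) = len x + len y \<longleftrightarrow> inversions x \<inter> conjugate x ` inversions y = {}"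
proof -
  have "len (x \<otimes> y) = len x + len y \<longleftrightarrow> card (inversions x \<inter> conjugate x ` inversions y) = 0"
    using length_mult[OF assms] by linarith
  also have "\<dots> \<longleftrightarrow> inversions x \<inter> conjugate x ` inversions y = {}"
    using finite_inversions[OF assms(1)] by simp
  finally show ?thesis .
qed

lemma inversions_mult_eq_Un:
  assumes "x \<in> carrier G" and "y \<in> carrier G" and "len (x \<otimes> y) = len x + len y"
  shows "inversions (x \<otimes> y) = inversions x \<union> conjugate x ` inversions y"
  using assms inversions_mult length_mult_eq_add_iff by blast

lemma length_gen [simp]: "s \<in> S \<Longrightarrow> len s = 1"
  using card_inversions[of s] by simp

lemma length_pos_if_inversion: "w \<in> carrier G \<Longrightarrow> r \<in> inversions w \<Longrightarrow> 0 < len w"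
  using card_inversions[of w] finite_inversions[of w] card_gt_0_iff by fastforce

lemma length_gen_mult:
  assumes w: "w \<in> carrier G" and s: "s \<in> S"
  shows "len (s \<otimes> w) = (if s \<in> inversions w then len w - 1 else len w + 1)"
proof -
  have "s \<in> conjugate s ` inversions w \<longleftrightarrow> s \<in> inversions w"
  proof
    assume "s \<in> conjugate s ` inversions w"
    then obtain r where r: "r \<in> inversions w" "s = conjugate s r"
      by blast
    have "r = conjugate s (conjugate s r)"
      using s r(1) inversions_closed[OF w] by auto
    also have "\<dots> = s"
      using s by (simp flip: r(2) add: conjugate_self)
    finally show "s \<in> inversions w"
      using r(1) by simp
  next
    assume "s \<in> inversions w"
    then show "s \<in> conjugate s ` inversions w"
      using s conjugate_self[of s] by force
  qed
  then have "inversions s \<inter> conjugate s ` inversions w = (if s \<in> inversions w then {s} else {})"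
    using s by auto
  then show ?thesis
    using length_mult[OF gen_closed[OF s] w] s by (cases "s \<in> inversions w") simp_all
qed

lemma length_mult_gen:
  assumes w: "w \<in> carrier G" and s: "s \<in> S"
  shows "len (w \<otimes> s) = (if conjugate w s \<in> inversions w then len w - 1 else len w + 1)"
proof -
  have "inversions w \<inter> conjugate w ` inversions s
      = (if conjugate w s \<in> inversions w then {conjugate w s} else {})"
    using s by auto
  then show ?thesis
    using length_mult[OF w gen_closed[OF s]] s by (cases "conjugate w s \<in> inversions w") simp_all
qed

lemma left_descent_iff:
  "w \<in> carrier G \<Longrightarrow> s \<in> S \<Longrightarrow> len (s \<otimes> w) < len w \<longleftrightarrow> s \<in> inversions w"
  using length_pos_if_inversion by (simp add: length_gen_mult)

lemma right_descents_iff: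
  "w \<in> carrier G \<Longrightarrow> s \<in> right_descents G S w \<longleftrightarrow> s \<in> S \<and> conjugate w s \<in> inversions w"
  unfolding right_descents_def using length_pos_if_inversion
  by (auto simp: length_mult_gen split: if_splits)

section \<open>Standard parabolic subgroups\<close>

lemma generate_gens_subset_carrier: "P \<subseteq> S \<Longrightarrow> generate G P \<subseteq> carrier G"
  using generate_incl gens_carrier by blast

lemma subgroup_generate_gens: "P \<subseteq> S \<Longrightarrow> subgroup (generate G P) G"
  using generate_is_subgroup gens_carrier by blast

lemma exists_shorter_subword:
  assumes "set ws \<subseteq> S" and "len (word_eval G ws) < length ws"
  shows "\<exists>vs. set vs \<subseteq> set ws \<and> length vs < length ws \<and> word_eval G vs = word_eval G ws"
  using assms
proof (induction ws)
  case (Cons s ws)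
  have s: "s \<in> S" and ws: "set ws \<subseteq> S"
    using Cons.prems by auto
  show ?case
  proof (cases "len (word_eval G ws) < length ws")
    case True
    then obtain vs where "set vs \<subseteq> set ws" "length vs < length ws" "word_eval G vs = word_eval G ws"
      using Cons.IH ws by blast
    then show ?thesis
      by (intro exI[of _ "s # vs"]) auto
  next
    case False
    then have "len (word_eval G ws) = length ws"
      using length_word_eval_le[OF ws] by simp
    then have "s \<in> inversions (word_eval G ws)"
      using Cons.prems(2) length_gen_mult[OF word_eval_gens_closed[OF ws] s]
      by (auto split: if_splits)
    then have "s \<in> set (refl_seq ws)"
      using inversions_subset_refl_seq[OF ws] by blast
    then obtain i where i: "i < length ws" "s = refl_seq ws ! i"
      by (auto simp: in_set_conv_nth)
    then have "word_eval G (s # ws) = word_eval G (remove_nth i ws)"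
      using refl_seq_nth_mult_word_eval[OF ws i(1)] by simp
    then show ?thesis
      using i set_remove_nth_subset[of i ws] length_remove_nth[OF i(1)]
      by (intro exI[of _ "remove_nth i ws"]) auto
  qed
qed simp

lemma reduced_word_in_generate:
  assumes P: "P \<subseteq> S" and w: "w \<in> generate G P"
  shows "\<exists>ws. set ws \<subseteq> P \<and> word_eval G ws = w \<and> length ws = len w"
proof -
  have "\<exists>n ws. set ws \<subseteq> P \<and> word_eval G ws = w \<and> length ws = n"
    using word_of_generate[OF w P] by blast
  from LeastI_ex[OF this] obtain ws where ws: "set ws \<subseteq> P" "word_eval G ws = w"
    and least: "length ws = (LEAST n. \<exists>ws. set ws \<subseteq> P \<and> word_eval G ws = w \<and> length ws = n)"
    by blast
  have wsS: "set ws \<subseteq> S"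
    using ws P by blast
  have "\<not> len w < length ws"
  proof
    assume "len w < length ws"
    then obtain vs where vs: "set vs \<subseteq> set ws" "length vs < length ws" "word_eval G vs = w"
      using exists_shorter_subword[OF wsS] ws by auto
    then have "length ws \<le> length vs"
      unfolding least using ws by (intro Least_le) auto
    with vs show False
      by simp
  qed
  then show ?thesis
    using length_word_eval_le[OF wsS] ws by (intro exI[of _ ws]) auto
qed

lemma left_descent_in_generate:
  assumes P: "P \<subseteq> S" and w: "w \<in> generate G P" and "w \<noteq> \<one>"
  obtains s where "s \<in> P" and "s \<in> inversions w" and "len (s \<otimes> w) < len w"
    and "s \<otimes> w \<in> generate G P"
proof -
  obtain ws where ws: "set ws \<subseteq> P" "word_eval G ws = w" "length ws = len w"
    using reduced_word_in_generate[OF P w] by blast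
  then obtain s vs where ws_Cons: "ws = s # vs"
    using \<open>w \<noteq> \<one>\<close> by (cases ws) auto
  then have s: "s \<in> P" "s \<in> S" and vs: "set vs \<subseteq> P" "set vs \<subseteq> S"
    using ws P by auto
  have sw: "s \<otimes> w = word_eval G vs"
    using ws(2) ws_Cons s vs by (auto simp: gen_cancel_left)
  have shorter: "len (s \<otimes> w) < len w"
    using sw length_word_eval_le[OF vs(2)] ws(3) ws_Cons by simp
  moreover have "w \<in> carrier G"
    using w generate_gens_subset_carrier[OF P] by blast
  ultimately have "s \<in> inversions w"
    using left_descent_iff s(2) by blast
  then show ?thesis
    using that s(1) shorter sw word_eval_in_generate[OF vs(1)] by simp
qed

lemma length_one_in_generate:
  assumes P: "P \<subseteq> S" and w: "w \<in> generate G P" and "len w = 1"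
  shows "w \<in> P"
proof -
  obtain ws where "set ws \<subseteq> P" "word_eval G ws = w" "length ws = 1"
    using reduced_word_in_generate[OF P w] assms(3) by auto
  then show ?thesis
    using P by (auto simp: length_Suc_conv)
qed

lemma gen_in_generate_iff: "P \<subseteq> S \<Longrightarrow> s \<in> S \<Longrightarrow> s \<in> generate G P \<longleftrightarrow> s \<in> P"
  using length_one_in_generate generate.incl by fastforce

lemma inversions_in_generate:
  assumes P: "P \<subseteq> S" and w: "w \<in> generate G P"
  shows "inversions w \<subseteq> generate G P"
proof
  fix r assume "r \<in> inversions w"
  obtain ws where ws: "set ws \<subseteq> P" "word_eval G ws = w"
    using word_of_generate[OF w P] by blast
  then have wsS: "set ws \<subseteq> S"
    using P by blast
  have "r \<in> set (refl_seq ws)"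
    using \<open>r \<in> inversions w\<close> inversions_subset_refl_seq[OF wsS] ws(2) by blast
  then obtain i where i: "i < length ws" "r = refl_seq ws ! i"
    by (auto simp: in_set_conv_nth)
  then have r: "r = conjugate (word_eval G (take i ws)) (ws ! i)"
    using refl_seq_nth[of ws i] wsS gens_carrier by auto
  have "word_eval G (take i ws) \<in> generate G P"
    using ws(1) set_take_subset[of i ws] by (intro word_eval_in_generate) blast
  moreover have "ws ! i \<in> P"
    using ws(1) i(1) nth_mem by blast
  then have "ws ! i \<in> generate G P" and "ws ! i \<in> carrier G"
    using P by (auto intro: generate.incl)
  ultimately show "r \<in> generate G P"
    unfolding r by (simp add: conjugate_in_subgroup_iff[OF subgroup_generate_gens[OF P]])
qed

lemma generate_Int:
  assumes P: "P \<subseteq> S" and Q: "Q \<subseteq> S"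
  shows "generate G P \<inter> generate G Q = generate G (P \<inter> Q)"
proof
  show "generate G (P \<inter> Q) \<subseteq> generate G P \<inter> generate G Q"
    using mono_generate by blast
  have "w \<in> generate G (P \<inter> Q)" if "w \<in> generate G P" and "w \<in> generate G Q" for w
    using that
  proof (induction "len w" arbitrary: w rule: less_induct)
    case less
    show ?case
    proof (cases "w = \<one>")
      case True
      then show ?thesis
        by (simp add: generate.one)
    next
      case False
      then obtain s where s: "s \<in> P" "s \<in> inversions w" "len (s \<otimes> w) < len w"
        and sw: "s \<otimes> w \<in> generate G P"
        using left_descent_in_generate[OF P less.prems(1)] by blast
      have sS: "s \<in> S"
        using s P by blast
      have "s \<in> Q"
        using s(2) inversions_in_generate[OF Q less.prems(2)] gen_in_generate_iff[OF Q sS] by blast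
      then have "s \<otimes> w \<in> generate G Q"
        using less.prems(2) by (auto intro: generate.intros)
      then have "s \<otimes> w \<in> generate G (P \<inter> Q)"
        using less.hyps s(3) sw by blast
      moreover have "s \<in> generate G (P \<inter> Q)"
        using s(1) \<open>s \<in> Q\<close> by (auto intro: generate.incl)
      moreover have "w = s \<otimes> (s \<otimes> w)"
        using sS less.prems(1) generate_gens_subset_carrier[OF P] by (auto simp: gen_cancel_left)
      ultimately show ?thesis
        by (metis generate.eng)
    qed
  qed
  then show "generate G P \<inter> generate G Q \<subseteq> generate G (P \<inter> Q)"
    by blast
qed

lemma generate_disjoint:
  "P \<subseteq> S \<Longrightarrow> Q \<subseteq> S \<Longrightarrow> P \<inter> Q = {} \<Longrightarrow> generate G P \<inter> generate G Q = {\<one>}"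
  by (simp add: generate_Int generate_empty)

lemma generate_singleton:
  assumes t: "t \<in> S"
  shows "generate G {t} = {\<one>, t}"
proof
  show "{\<one>, t} \<subseteq> generate G {t}"
    by (auto intro: generate.intros)
  have "word_eval G ws \<in> {\<one>, t}" if "set ws \<subseteq> {t}" for ws
    using that t by (induction ws) auto
  then show "generate G {t} \<subseteq> {\<one>, t}"
    using word_of_generate[of _ "{t}"] t by blast
qed

lemma inversions_disjoint_generate:
  assumes P: "P \<subseteq> S" and Q: "Q \<subseteq> S" and PQ: "P \<inter> Q = {}" and w: "w \<in> generate G P"
  shows "inversions w \<inter> generate G Q = {}"
proof (rule Int_emptyI)
  fix r assume r: "r \<in> inversions w" and "r \<in> generate G Q"
  moreover have "r \<in> generate G P"
    using r inversions_in_generate[OF P w] by blast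
  ultimately have "r = \<one>"
    using generate_disjoint[OF P Q PQ] by blast
  moreover have "r \<in> reflections"
    using r w generate_gens_subset_carrier[OF P] inversions_subset_reflections by blast
  ultimately show False
    using reflection_not_one by blast
qed

lemma length_mult_disjoint:
  assumes P: "P \<subseteq> S" and Q: "Q \<subseteq> S" and PQ: "P \<inter> Q = {}"
    and x: "x \<in> generate G P" and y: "y \<in> generate G Q"
  shows "len (x \<otimes> y) = len x + len y"
proof -
  have xc: "x \<in> carrier G" and yc: "y \<in> carrier G"
    using x y generate_gens_subset_carrier P Q by blast+
  have "conjugate x u \<notin> generate G P" if "u \<in> inversions y" for u
  proof -
    have "u \<notin> generate G P"
      using that inversions_disjoint_generate[OF Q P _ y] PQ by blast
    then show ?thesis
      using conjugate_in_subgroup_iff[OF subgroup_generate_gens[OF P] x, of u]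
        inversions_closed[OF yc] that by blast
  qed
  then have "inversions x \<inter> conjugate x ` inversions y = {}"
    using inversions_in_generate[OF P x] by blast
  then show ?thesis
    using length_mult_eq_add_iff[OF xc yc] by simp
qed

lemma conjugate_inversions_eq_if_twisted_commute:
  assumes P: "P \<subseteq> S" and Q: "Q \<subseteq> S" and PQ: "P \<inter> Q = {}"
    and x: "x \<in> generate G P" and g: "g \<in> generate G Q" and p: "p \<in> carrier G"
    and eq: "x \<otimes> g = g \<otimes> p" and length_gp: "len (g \<otimes> p) = len g + len p"
  shows "conjugate x ` inversions g = inversions g"
proof (rule image_eq_if_subset_image)
  have xc: "x \<in> carrier G" and gc: "g \<in> carrier G"
    using x g generate_gens_subset_carrier P Q by blast+
  have "inversions g \<subseteq> inversions (x \<otimes> g)"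
    using inversions_mult_eq_Un[OF gc p length_gp] eq by simp
  also have "\<dots> = inversions x \<union> conjugate x ` inversions g"
    using inversions_mult_eq_Un[OF xc gc length_mult_disjoint[OF P Q PQ x g]] .
  finally show "inversions g \<subseteq> conjugate x ` inversions g"
    using inversions_disjoint_generate[OF P Q PQ x] inversions_in_generate[OF Q g] by blast
  show "finite (inversions g)"
    using finite_inversions[OF gc] .
  show "inj_on (conjugate x) (inversions g)"
    using inj_on_subset[OF inj_on_conjugate[OF xc] inversions_closed[OF gc]] .
qed

lemma conjugate_inversions_subset_if_twisted_commute:
  assumes P: "P \<subseteq> S" and Q: "Q \<subseteq> S" and PQ: "P \<inter> Q = {}"
    and z: "z \<in> generate G P" and f: "f \<in> generate G Q" and q: "q \<in> carrier G"
    and eq: "z \<otimes> f = f \<otimes> q" and length_fq: "len (f \<otimes> q) = len f + len q"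
  shows "conjugate f ` inversions q \<subseteq> inversions z"
proof -
  have zc: "z \<in> carrier G" and fc: "f \<in> carrier G"
    using z f generate_gens_subset_carrier P Q by blast+
  have "conjugate z ` inversions f = inversions f"
    using conjugate_inversions_eq_if_twisted_commute[OF P Q PQ z f q eq length_fq] .
  then have "inversions (f \<otimes> q) = inversions z \<union> inversions f"
    using inversions_mult_eq_Un[OF zc fc length_mult_disjoint[OF P Q PQ z f]] eq by simp
  moreover have "inversions (f \<otimes> q) = inversions f \<union> conjugate f ` inversions q"
    and "inversions f \<inter> conjugate f ` inversions q = {}"
    using inversions_mult_eq_Un[OF fc q length_fq] length_mult_eq_add_iff[OF fc q] length_fq
    by auto
  ultimately show ?thesis
    by blast
qed

lemma right_descents_left_mult_generate:
  assumes Q: "Q \<subseteq> S" and g: "g \<in> generate G Q" and w: "w \<in> carrier G" and s: "s \<in> S"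
    and not_in: "conjugate w s \<notin> generate G Q"
  shows "s \<in> right_descents G S (g \<otimes> w) \<longleftrightarrow> s \<in> right_descents G S w"
proof -
  have gc: "g \<in> carrier G"
    using g generate_gens_subset_carrier[OF Q] by blast
  define r where "r = conjugate w s"
  have rc: "r \<in> carrier G"
    using w s by (simp add: r_def)
  have "conjugate g r \<notin> generate G Q"
    using not_in conjugate_in_subgroup_iff[OF subgroup_generate_gens[OF Q] g rc] by (simp add: r_def)
  then have "conjugate g r \<notin> inversions g"
    using inversions_in_generate[OF Q g] by blast
  moreover have "conjugate g r \<in> conjugate g ` inversions w \<longleftrightarrow> r \<in> inversions w"
    using inj_on_conjugate[OF gc] inversions_closed[OF w] rc by (auto dest: inj_onD)
  ultimately have "conjugate g r \<in> inversions (g \<otimes> w) \<longleftrightarrow> r \<in> inversions w"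
    using inversions_mult[OF gc w] by blast
  then show ?thesis
    using right_descents_iff gc w s by (simp add: r_def conjugate_mult)
qed

end

section \<open>Two disjoint sets of generators\<close>

locale coxeter_disjoint_parabolics = coxeter +
  fixes B C :: "'a set"
  assumes B: "B \<subseteq> S" and C: "C \<subseteq> S" and BC: "B \<inter> C = {}"
begin

lemma CB: "C \<inter> B = {}"
  using BC by blast

lemma generate_B_closed: "x \<in> generate G B \<Longrightarrow> x \<in> carrier G"
  using generate_gens_subset_carrier[OF B] by blast

lemma generate_C_closed: "x \<in> generate G C \<Longrightarrow> x \<in> carrier G"
  using generate_gens_subset_carrier[OF C] by blast

lemma generate_B_Int_C: "generate G B \<inter> generate G C = {\<one>}"
  using generate_disjoint[OF B C BC] .

lemma conjugate_gen_not_in_generate_C: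
  assumes f: "f \<in> generate G B" and t: "t \<in> B"
  shows "conjugate f t \<notin> generate G C"
proof
  assume in_C: "conjugate f t \<in> generate G C"
  have "t \<in> generate G B" and tc: "t \<in> carrier G"
    using t B by (auto intro: generate.incl)
  then have "conjugate f t \<in> generate G B"
    using conjugate_in_subgroup_iff[OF subgroup_generate_gens[OF B] f] by simp
  with in_C have "conjugate f t = \<one>"
    using generate_B_Int_C by blast
  then show False
    using t B one_not_gen conjugate_eq_one_iff[OF generate_B_closed[OF f] tc] by auto
qed

lemma gen_commute_if_conjugate_in_generate_B:
  assumes b: "b \<in> B" and c: "c \<in> C" and cb: "conjugate c b \<in> generate G B"
  shows "c \<otimes> b = b \<otimes> c"
proof -
  have bS: "b \<in> S" and cS: "c \<in> S" and bB: "b \<in> generate G B" and cC: "c \<in> generate G C"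
    using b c B C by (auto intro: generate.incl)
  have "len (c \<otimes> conjugate c b) = 1 + len (conjugate c b)"
    using length_mult_disjoint[OF C B CB cC cb] cS by simp
  moreover have "c \<otimes> conjugate c b = b \<otimes> c"
    using cS bS by (simp add: conjugate_def m_assoc gen_cancel_left)
  moreover have length_bc: "len (b \<otimes> c) = 2"
    using length_mult_disjoint[OF B C BC bB cC] bS cS by simp
  ultimately have "len (conjugate c b) = 1"
    by simp
  moreover have "c \<otimes> (b \<otimes> c) = conjugate c b"
    using cS bS by (simp add: conjugate_def m_assoc)
  ultimately have "len (c \<otimes> (b \<otimes> c)) < len (b \<otimes> c)"
    using length_bc by simp
  then have "c \<in> inversions (b \<otimes> c)"
    using left_descent_iff cS bS by simp
  moreover have "inversions (b \<otimes> c) = sym_diff {b} {conjugate b c}"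
    using inversions_mult bS cS by simp
  moreover have "c \<noteq> b"
    using b c BC by blast
  ultimately have "conjugate b c = c"
    by auto
  then show ?thesis
    using conjugate_mult_eq[of b c] bS cS by simp
qed

lemma gen_twisted_commute_eq:
  assumes h: "h \<in> generate G B" and c: "c \<in> C" and c': "c' \<in> generate G C"
    and eq: "c \<otimes> h = h \<otimes> c'"
  shows "c = c'"
  using h eq
proof (induction "len h" arbitrary: h rule: less_induct)
  case less
  have cS: "c \<in> S" and cC: "c \<in> generate G C" and c'c: "c' \<in> carrier G"
    using c C c' generate_C_closed by (auto intro: generate.incl)
  show ?case
  proof (cases "h = \<one>")
    case True
    then show ?thesis
      using less.prems(2) cS c'c by simp
  next
    case False
    then obtain b where b: "b \<in> B" "b \<in> inversions h" "len (b \<otimes> h) < len h"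
      and bh: "b \<otimes> h \<in> generate G B"
      using left_descent_in_generate[OF B less.prems(1)] by blast
    have bS: "b \<in> S" and hc: "h \<in> carrier G"
      using b(1) B less.prems(1) generate_B_closed by auto
    have "conjugate c ` inversions h = inversions h"
      using conjugate_inversions_eq_if_twisted_commute[OF C B CB cC less.prems(1) c'c less.prems(2)]
        length_mult_disjoint[OF B C BC less.prems(1) c'] .
    then have "conjugate c b \<in> generate G B"
      using b(2) inversions_in_generate[OF B less.prems(1)] by blast
    then have comm: "c \<otimes> b = b \<otimes> c"
      using gen_commute_if_conjugate_in_generate_B[OF b(1) c] by blast
    have "c \<otimes> (b \<otimes> h) = b \<otimes> (c \<otimes> h)"
      using bS cS hc by (simp add: comm flip: m_assoc)
    also have "\<dots> = (b \<otimes> h) \<otimes> c'"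
      using less.prems(2) bS hc c'c by (simp add: m_assoc)
    finally show ?thesis
      using less.hyps b(3) bh by blast
  qed
qed

lemma parabolic_twisted_commute_eq:
  assumes g: "g \<in> generate G C" and x: "x \<in> generate G B" and p: "p \<in> generate G B"
    and eq: "x \<otimes> g = g \<otimes> p"
  shows "x = p"
  using g eq
proof (induction "len g" arbitrary: g rule: less_induct)
  case less
  have xc: "x \<in> carrier G" and pc: "p \<in> carrier G" and gc: "g \<in> carrier G"
    using x p less.prems(1) generate_B_closed generate_C_closed by auto
  show ?case
  proof (cases "g = \<one>")
    case True
    then show ?thesis
      using less.prems(2) xc pc by simp
  next
    case False
    then obtain c where c: "c \<in> C" "c \<in> inversions g" "len (c \<otimes> g) < len g"
      and cg: "c \<otimes> g \<in> generate G C"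
      using left_descent_in_generate[OF C less.prems(1)] by blast
    have "conjugate x ` inversions g = inversions g"
      using conjugate_inversions_eq_if_twisted_commute[OF B C BC x less.prems(1) pc less.prems(2)]
        length_mult_disjoint[OF C B CB less.prems(1) p] .
    then obtain r where r: "r \<in> inversions g" "c = conjugate x r"
      using c(2) by blast
    have rC: "r \<in> generate G C"
      using r(1) inversions_in_generate[OF C less.prems(1)] by blast
    have "c \<otimes> x = x \<otimes> r"
      using r(2) conjugate_mult_eq xc generate_C_closed[OF rC] by simp
    then have comm: "x \<otimes> c = c \<otimes> x"
      using gen_twisted_commute_eq[OF x c(1) rC] by simp
    have cS: "c \<in> S"
      using c(1) C by blast
    have "x \<otimes> (c \<otimes> g) = c \<otimes> (x \<otimes> g)"
      using cS xc gc by (simp add: comm flip: m_assoc)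
    also have "\<dots> = (c \<otimes> g) \<otimes> p"
      using less.prems(2) cS gc pc by (simp add: m_assoc)
    finally show ?thesis
      using less.hyps c(3) cg by blast
  qed
qed

lemma conjugate_mult_C_not_inversion:
  assumes f: "f \<in> generate G B" and g: "g \<in> generate G C"
    and r: "r \<in> generate G B" "r \<noteq> \<one>" and not_inv: "conjugate f r \<notin> inversions f"
  shows "conjugate (f \<otimes> g) r \<notin> inversions (f \<otimes> g)"
proof
  assume asm: "conjugate (f \<otimes> g) r \<in> inversions (f \<otimes> g)"
  have fc: "f \<in> carrier G" and gc: "g \<in> carrier G" and rc: "r \<in> carrier G"
    using f g r generate_B_closed generate_C_closed by auto
  define q where "q = conjugate g r"
  have qc: "q \<in> carrier G"
    using gc rc by (simp add: q_def)
  have "q \<notin> generate G C"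
    using r conjugate_in_subgroup_iff[OF subgroup_generate_gens[OF C] g rc] generate_B_Int_C
    by (auto simp: q_def)
  then have "q \<notin> inversions g"
    using inversions_in_generate[OF C g] by blast
  then have "conjugate f q \<notin> conjugate f ` inversions g"
    using inj_on_conjugate[OF fc] inversions_closed[OF gc] qc by (auto dest: inj_onD)
  moreover have "conjugate f q = conjugate (f \<otimes> g) r"
    using fc gc rc by (simp add: q_def conjugate_mult)
  ultimately have "conjugate f q \<in> inversions f"
    using asm inversions_mult[OF fc gc] by auto
  then have "q \<in> generate G B"
    using inversions_in_generate[OF B f] conjugate_in_subgroup_iff[OF subgroup_generate_gens[OF B] f qc]
    by blast
  moreover have "q \<otimes> g = g \<otimes> r"
    using conjugate_mult_eq[OF gc rc] by (simp add: q_def)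
  ultimately have "q = r"
    using parabolic_twisted_commute_eq[OF g _ r(1)] by blast
  then show False
    using \<open>conjugate f q \<in> inversions f\<close> not_inv by simp
qed

lemma length_mult_generate_insert:
  assumes t: "t \<in> B" and f: "f \<in> generate G B" and not_desc: "t \<notin> right_descents G S f"
    and q: "q \<in> generate G (insert t C)"
  shows "len (f \<otimes> q) = len f + len q"
proof -
  have tS: "t \<in> S" and I: "insert t C \<subseteq> S"
    using t B C by auto
  have fc: "f \<in> carrier G" and qc: "q \<in> carrier G"
    using f q generate_B_closed generate_gens_subset_carrier[OF I] by auto
  have not_inv: "conjugate f t \<notin> inversions f"
    using not_desc right_descents_iff[OF fc] tS by simp
  have "inversions f \<inter> conjugate f ` inversions q = {}"
  proof (rule Int_emptyI)
    fix r assume r: "r \<in> inversions f" "r \<in> conjugate f ` inversions q"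
    then obtain u where u: "u \<in> inversions q" "r = conjugate f u"
      by blast
    have uc: "u \<in> carrier G"
      using u(1) inversions_closed[OF qc] by blast
    have "u \<in> generate G B"
      using r(1) u(2) inversions_in_generate[OF B f]
        conjugate_in_subgroup_iff[OF subgroup_generate_gens[OF B] f uc] by blast
    moreover have "u \<in> generate G (insert t C)"
      using u(1) inversions_in_generate[OF I q] by blast
    moreover have "B \<inter> insert t C = {t}"
      using t BC by blast
    ultimately have "u \<in> generate G {t}"
      using generate_Int[OF B I] by (metis IntI)
    moreover have "u \<noteq> \<one>"
      using u(1) inversions_subset_reflections[OF qc] reflection_not_one by blast
    ultimately have "u = t"
      using generate_singleton[OF tS] by blast
    then show False
      using not_inv r(1) u(2) by simp
  qed
  then show ?thesis
    using length_mult_eq_add_iff[OF fc qc] by simp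
qed

lemma generate_insert_conjugate_in_C:
  assumes t: "t \<in> B" and f: "f \<in> generate G B" and not_desc: "t \<notin> right_descents G S f"
    and q: "q \<in> generate G (insert t C)" and fq: "conjugate f q \<in> generate G C"
  shows "q \<in> generate G C"
  using q fq
proof (induction "len q" arbitrary: q rule: less_induct)
  case less
  have I: "insert t C \<subseteq> S"
    using t B C by auto
  have fc: "f \<in> carrier G" and qc: "q \<in> carrier G"
    using f less.prems(1) generate_B_closed generate_gens_subset_carrier[OF I] by auto
  show ?case
  proof (cases "q = \<one>")
    case True
    then show ?thesis
      by (simp add: generate.one)
  next
    case False
    then obtain s where s: "s \<in> insert t C" "s \<in> inversions q" "len (s \<otimes> q) < len q"
      and sq: "s \<otimes> q \<in> generate G (insert t C)"
      using left_descent_in_generate[OF I less.prems(1)] by blast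
    have sS: "s \<in> S"
      using s(1) I by blast
    have "conjugate f ` inversions q \<subseteq> inversions (conjugate f q)"
      using conjugate_inversions_subset_if_twisted_commute[OF C B CB less.prems(2) f qc]
        conjugate_mult_eq[OF fc qc] length_mult_generate_insert[OF t f not_desc less.prems(1)]
      by simp
    then have fs: "conjugate f s \<in> generate G C"
      using s(2) inversions_in_generate[OF C less.prems(2)] by blast
    then have "s \<in> C"
      using s(1) conjugate_gen_not_in_generate_C[OF f t] by blast
    have "conjugate f (s \<otimes> q) = conjugate f s \<otimes> conjugate f q"
      using conjugate_distrib[OF fc _ qc] sS by simp
    then have "conjugate f (s \<otimes> q) \<in> generate G C"
      using fs less.prems(2) by (simp add: generate.eng)
    then have "s \<otimes> q \<in> generate G C"
      using less.hyps s(3) sq by blast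
    then have "s \<otimes> (s \<otimes> q) \<in> generate G C"
      using \<open>s \<in> C\<close> generate.incl generate.eng by metis
    then show ?thesis
      using sS qc by (simp add: gen_cancel_left)
  qed
qed

lemma conjugate_mult_gen_not_in_generate_C:
  assumes t: "t \<in> B" and f: "f \<in> generate G B" and not_desc: "t \<notin> right_descents G S f"
    and g: "g \<in> generate G C"
  shows "conjugate (f \<otimes> g) t \<notin> generate G C"
proof
  assume asm: "conjugate (f \<otimes> g) t \<in> generate G C"
  have tS: "t \<in> S" and I: "insert t C \<subseteq> S"
    using t B C by auto
  have fc: "f \<in> carrier G" and gc: "g \<in> carrier G"
    using f g generate_B_closed generate_C_closed by auto
  have gI: "g \<in> generate G (insert t C)"
    using g mono_generate[of C "insert t C"] by blast
  have "t \<in> generate G (insert t C)"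
    by (simp add: generate.incl)
  then have qI: "conjugate g t \<in> generate G (insert t C)"
    using conjugate_in_subgroup_iff[OF subgroup_generate_gens[OF I] gI] tS by simp
  have "conjugate f (conjugate g t) \<in> generate G C"
    using asm fc gc tS by (simp add: conjugate_mult)
  then have "conjugate g t \<in> generate G C"
    using generate_insert_conjugate_in_C[OF t f not_desc qI] by blast
  then have "t \<in> generate G C"
    using conjugate_in_subgroup_iff[OF subgroup_generate_gens[OF C] g] tS by simp
  then show False
    using gen_in_generate_iff[OF C tS] t BC by blast
qed

lemma not_right_descent_mult_C:
  assumes t: "t \<in> B" and f: "f \<in> generate G B" and g: "g \<in> generate G C"
    and not_desc: "t \<notin> right_descents G S f"
  shows "t \<notin> right_descents G S (f \<otimes> g)"
proof -
  have tS: "t \<in> S" and fc: "f \<in> carrier G" and gc: "g \<in> carrier G"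
    using t B f g generate_B_closed generate_C_closed by auto
  have "t \<in> generate G B" and "t \<noteq> \<one>"
    using t tS one_not_gen by (auto intro: generate.incl)
  moreover have "conjugate f t \<notin> inversions f"
    using not_desc right_descents_iff[OF fc] tS by simp
  ultimately have "conjugate (f \<otimes> g) t \<notin> inversions (f \<otimes> g)"
    using conjugate_mult_C_not_inversion[OF f g] by blast
  then show ?thesis
    using right_descents_iff fc gc by simp
qed

lemma right_descent_C_mult_iff:
  assumes t: "t \<in> B" and f: "f \<in> generate G B" and g: "g \<in> generate G C"
  shows "t \<in> right_descents G S (g \<otimes> f) \<longleftrightarrow> t \<in> right_descents G S f"
  using right_descents_left_mult_generate[OF C g generate_B_closed[OF f] _
      conjugate_gen_not_in_generate_C[OF f t]] t B
  by blast

lemma not_right_descent_C_mult_C: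
  assumes t: "t \<in> B" and f: "f \<in> generate G B" and g: "g \<in> generate G C"
    and g': "g' \<in> generate G C" and not_desc: "t \<notin> right_descents G S f"
  shows "t \<notin> right_descents G S (g \<otimes> f \<otimes> g')"
proof -
  have fc: "f \<in> carrier G" and gc: "g \<in> carrier G" and g'c: "g' \<in> carrier G"
    using f g g' generate_B_closed generate_C_closed by auto
  have "t \<in> right_descents G S (g \<otimes> (f \<otimes> g')) \<longleftrightarrow> t \<in> right_descents G S (f \<otimes> g')"
    using right_descents_left_mult_generate[OF C g _ _
        conjugate_mult_gen_not_in_generate_C[OF t f not_desc g']] t B fc g'c
    by blast
  then show ?thesis
    using not_right_descent_mult_C[OF t f g' not_desc] fc gc g'c by (simp add: m_assoc)
qed

lemma right_descent_mult_C_mult: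
  assumes t: "t \<in> B" and f: "f \<in> generate G B" and f': "f' \<in> generate G B"
    and g: "g \<in> generate G C" and length_ff': "len (f \<otimes> f') = len f + len f'"
    and desc: "t \<in> right_descents G S f'"
  shows "t \<in> right_descents G S (f \<otimes> g \<otimes> f')"
proof -
  have tS: "t \<in> S" and fc: "f \<in> carrier G" and f'c: "f' \<in> carrier G" and gc: "g \<in> carrier G"
    using t B f f' g generate_B_closed generate_C_closed by auto
  define p where "p = conjugate f' t"
  have p: "p \<in> inversions f'"
    using desc right_descents_iff[OF f'c] by (simp add: p_def)
  then have "p \<in> generate G B" and "p \<noteq> \<one>" and pc: "p \<in> carrier G"
    using inversions_in_generate[OF B f'] inversions_subset_reflections[OF f'c] reflection_not_one
      reflection_closed by blast+
  moreover have "conjugate f p \<notin> inversions f"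
    using p length_mult_eq_add_iff[OF fc f'c] length_ff' by blast
  ultimately have "conjugate (f \<otimes> g) p \<notin> inversions (f \<otimes> g)"
    using conjugate_mult_C_not_inversion[OF f g] by blast
  moreover have "conjugate (f \<otimes> g) p \<in> conjugate (f \<otimes> g) ` inversions f'"
    using p by blast
  ultimately have "conjugate (f \<otimes> g) p \<in> inversions (f \<otimes> g \<otimes> f')"
    using inversions_mult[of "f \<otimes> g" f'] fc gc f'c by simp
  moreover have "conjugate (f \<otimes> g) p = conjugate (f \<otimes> g \<otimes> f') t"
    using fc gc f'c tS by (simp add: p_def conjugate_mult)
  ultimately show ?thesis
    using right_descents_iff fc gc f'c tS by simp
qed

lemma right_descent_C_mult_C_iff_if_commute:
  assumes s: "s \<in> B" and comm: "\<forall>c\<in>C. s \<otimes> c = c \<otimes> s" and f: "f \<in> generate G B"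
    and g: "g \<in> generate G C" and g': "g' \<in> generate G C"
  shows "s \<in> right_descents G S (g \<otimes> f \<otimes> g') \<longleftrightarrow> s \<in> right_descents G S f"
proof -
  have sS: "s \<in> S" and fc: "f \<in> carrier G" and gc: "g \<in> carrier G" and g'c: "g' \<in> carrier G"
    using s B f g g' generate_B_closed generate_C_closed by auto
  have sg': "s \<otimes> g' = g' \<otimes> s"
    using commute_generate[OF gen_closed[OF sS] _ comm g'] C gens_carrier by blast
  then have "conjugate g' s = s"
    using sS g'c by (simp add: conjugate_def m_assoc flip: sg')
  then have conj: "conjugate (f \<otimes> g') s = conjugate f s"
    using fc g'c sS by (simp add: conjugate_mult)
  have "s \<in> right_descents G S (g \<otimes> (f \<otimes> g')) \<longleftrightarrow> s \<in> right_descents G S (f \<otimes> g')"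
    using right_descents_left_mult_generate[OF C g _ sS] conjugate_gen_not_in_generate_C[OF f s]
      conj fc g'c by simp
  moreover have "f \<otimes> s \<in> generate G B"
    using f s by (simp add: generate.eng generate.incl)
  moreover have "f \<otimes> g' \<otimes> s = (f \<otimes> s) \<otimes> g'"
    using sg' fc g'c sS by (simp add: m_assoc)
  ultimately have "len (f \<otimes> g' \<otimes> s) = len (f \<otimes> s) + len g'"
    using length_mult_disjoint[OF B C BC _ g'] by simp
  moreover have "len (f \<otimes> g') = len f + len g'"
    using length_mult_disjoint[OF B C BC f g'] .
  ultimately have "s \<in> right_descents G S (f \<otimes> g') \<longleftrightarrow> s \<in> right_descents G S f"
    using sS by (simp add: right_descents_def)
  with \<open>s \<in> right_descents G S (g \<otimes> (f \<otimes> g')) \<longleftrightarrow> _\<close> show ?thesis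
    using fc gc g'c by (simp add: m_assoc)
qed

end

theorem lemma10p23:
  fixes G :: "('a, 'b) monoid_scheme" and S B C :: "'a set" and f f' g g' :: 'a
  assumes cox: "coxeter_system G S"
    and part: "S = B \<union> C" "B \<inter> C = {}"
    and f: "f \<in> generate G B" and f': "f' \<in> generate G B"
    and g: "g \<in> generate G C" and g': "g' \<in> generate G C"
  shows "cox_length G S (f \<otimes>\<^bsub>G\<^esub> g) = cox_length G S f + cox_length G S g
       \<and> cox_length G S (g \<otimes>\<^bsub>G\<^esub> f) = cox_length G S f + cox_length G S g
       \<and> (\<forall>s\<in>B. (\<forall>c\<in>C. s \<otimes>\<^bsub>G\<^esub> c = c \<otimes>\<^bsub>G\<^esub> s) \<longrightarrow>
             (s \<in> right_descents G S f \<longleftrightarrow>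
              s \<in> right_descents G S (g \<otimes>\<^bsub>G\<^esub> f \<otimes>\<^bsub>G\<^esub> g')))
       \<and> (\<forall>t\<in>B.
             (t \<notin> right_descents G S f \<longrightarrow> t \<notin> right_descents G S (f \<otimes>\<^bsub>G\<^esub> g))
           \<and> (t \<in> right_descents G S f \<longleftrightarrow> t \<in> right_descents G S (g \<otimes>\<^bsub>G\<^esub> f))
           \<and> (t \<notin> right_descents G S f \<longrightarrow>
                t \<notin> right_descents G S (g \<otimes>\<^bsub>G\<^esub> f \<otimes>\<^bsub>G\<^esub> g'))
           \<and> (cox_length G S (f \<otimes>\<^bsub>G\<^esub> f') = cox_length G S f + cox_length G S f' \<longrightarrow>
                t \<in> right_descents G S f' \<longrightarrow>
                t \<in> right_descents G S (f \<otimes>\<^bsub>G\<^esub> g \<otimes>\<^bsub>G\<^esub> f')))"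
proof -
  have "coxeter G S"
    using cox by (simp add: coxeter_def coxeter_axioms_def coxeter_system_def)
  then interpret coxeter_disjoint_parabolics G S B C
    using part by (simp add: coxeter_disjoint_parabolics_def coxeter_disjoint_parabolics_axioms_def)
  show ?thesis
    using length_mult_disjoint[OF B C BC f g] length_mult_disjoint[OF C B CB g f]
      right_descent_C_mult_C_iff_if_commute[OF _ _ f g g'] not_right_descent_mult_C[OF _ f g]
      right_descent_C_mult_iff[OF _ f g] not_right_descent_C_mult_C[OF _ f g g']
      right_descent_mult_C_mult[OF _ f f' g]
    by auto
qed

end
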